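(* Let $(x_t)_{t\in\Omega}$ be a continuous frame for an infinite dimensional Hilbert space $H$. Then there exists $x\in H$ such that $(x_t)_{t\in\Omega}$ does not do stable phase retrieval near $x$. Moreover, the set of $x\in H$ such that $(x_t)_{t\in\Omega}$ does not do stable phase retrieval near $x$ is dense in $H$.
   Context: $H$ is a real or complex Hilbert space. A continuous frame $(x_t)_{t\in\Omega}$ over a measure space $(\Omega,\mu)$ (with $t\mapsto\langle x,x_t\rangle$ measurable for each $x$) satisfies $A\|x\|^2\le\int_\Omega|\langle x,x_t\rangle|^2d\mu\le B\|x\|^2$ for all $x\in H$ with $B\ge A>0$; its analysis operator is $\Theta(x)=(\langle x,x_t\rangle)_{t\in\Omega}\in L_2(\Omega)$, $|\Theta x|=(|\langle x,x_t\rangle|)_{t\in\Omega}$. For $x,y$ with $x\neq\lambda y$ for all scalars $|\lambda|=1$, set $\Psi(x,y)=\||\Theta x|-|\Theta y|\|_{L_2(\Omega)}/\min_{|\lambda|=1}\|x-\lambda y\|$. For $C>0$, the frame does $C$-stable phase retrieval near $x$ if $\liminf_{y\to x,\ y\notin\{\lambda x:|\lambda|=1\}} C\,\Psi(x,y)\ge1$, and does stable phase retrieval near $x$ if this holds for some $C>0$. *)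

theory Defs
  imports "HOL-Analysis.Analysis"
begin

text \<open>Generic framework: a Hilbert space H over a scalar field 'k (real or complex),
  given by its inner product ip (linear in the first argument), its scalar
  multiplication sc, and the set U of unimodular scalars.\<close>

definition complex_hilbert :: "(complex \<Rightarrow> 'a::banach \<Rightarrow> 'a) \<Rightarrow> ('a \<Rightarrow> 'a \<Rightarrow> complex) \<Rightarrow> bool" where
  "complex_hilbert sc ip \<longleftrightarrow>
     (\<forall>a x y. sc a (x + y) = sc a x + sc a y) \<and>
     (\<forall>a b x. sc (a + b) x = sc a x + sc b x) \<and>
     (\<forall>a b x. sc (a * b) x = sc a (sc b x)) \<and>
     (\<forall>x. sc 1 x = x) \<and>
     (\<forall>r x. sc (complex_of_real r) x = r *\<^sub>R x) \<and>
     (\<forall>x y z. ip (x + y) z = ip x z + ip y z) \<and>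
     (\<forall>c x y. ip (sc c x) y = c * ip x y) \<and>
     (\<forall>x y. ip y x = cnj (ip x y)) \<and>
     (\<forall>x. ip x x = complex_of_real ((norm x)\<^sup>2))"

definition infinite_dim :: "('k \<Rightarrow> 'a::real_vector \<Rightarrow> 'a) \<Rightarrow> bool" where
  "infinite_dim sc \<longleftrightarrow>
     (\<forall>S::'a set. finite S \<longrightarrow> (\<exists>v. \<forall>c. v \<noteq> (\<Sum>s\<in>S. sc (c s) s)))"

definition continuous_frame ::
  "'m measure \<Rightarrow> ('a::real_normed_vector \<Rightarrow> 'a \<Rightarrow> 'k::{real_normed_field,second_countable_topology}) \<Rightarrow> ('m \<Rightarrow> 'a) \<Rightarrow> bool" where
  "continuous_frame M ip xf \<longleftrightarrow>
     (\<forall>y. (\<lambda>t. ip y (xf t)) \<in> borel_measurable M) \<and>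
     (\<exists>A B. 0 < A \<and> A \<le> B \<and>
        (\<forall>y. ennreal (A * (norm y)\<^sup>2) \<le> (\<integral>\<^sup>+ t. ennreal ((norm (ip y (xf t)))\<^sup>2) \<partial>M) \<and>
             (\<integral>\<^sup>+ t. ennreal ((norm (ip y (xf t)))\<^sup>2) \<partial>M) \<le> ennreal (B * (norm y)\<^sup>2)))"

definition phase_dist :: "('k \<Rightarrow> 'a::real_normed_vector \<Rightarrow> 'a) \<Rightarrow> 'k set \<Rightarrow> 'a \<Rightarrow> 'a \<Rightarrow> real" where
  "phase_dist sc U x y = Inf ((\<lambda>l. norm (x - sc l y)) ` U)"

definition abs_analysis_dist ::
  "'m measure \<Rightarrow> ('a \<Rightarrow> 'a \<Rightarrow> 'k::real_normed_field) \<Rightarrow> ('m \<Rightarrow> 'a) \<Rightarrow> 'a \<Rightarrow> 'a \<Rightarrow> real" where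
  "abs_analysis_dist M ip xf x y =
     sqrt (enn2real (\<integral>\<^sup>+ t. ennreal ((norm (ip x (xf t)) - norm (ip y (xf t)))\<^sup>2) \<partial>M))"

definition Psi ::
  "'m measure \<Rightarrow> ('a::real_normed_vector \<Rightarrow> 'a \<Rightarrow> 'k::real_normed_field) \<Rightarrow> ('k \<Rightarrow> 'a \<Rightarrow> 'a) \<Rightarrow> 'k set
     \<Rightarrow> ('m \<Rightarrow> 'a) \<Rightarrow> 'a \<Rightarrow> 'a \<Rightarrow> real" where
  "Psi M ip sc U xf x y = abs_analysis_dist M ip xf x y / phase_dist sc U x y"

definition C_stable_PR_near ::
  "'m measure \<Rightarrow> ('a::real_normed_vector \<Rightarrow> 'a \<Rightarrow> 'k::real_normed_field) \<Rightarrow> ('k \<Rightarrow> 'a \<Rightarrow> 'a) \<Rightarrow> 'k set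
     \<Rightarrow> ('m \<Rightarrow> 'a) \<Rightarrow> real \<Rightarrow> 'a \<Rightarrow> bool" where
  "C_stable_PR_near M ip sc U xf C x \<longleftrightarrow>
     Liminf (at x within - ((\<lambda>l. sc l x) ` U)) (\<lambda>y. ereal (C * Psi M ip sc U xf x y)) \<ge> 1"

definition stable_PR_near ::
  "'m measure \<Rightarrow> ('a::real_normed_vector \<Rightarrow> 'a \<Rightarrow> 'k::real_normed_field) \<Rightarrow> ('k \<Rightarrow> 'a \<Rightarrow> 'a) \<Rightarrow> 'k set
     \<Rightarrow> ('m \<Rightarrow> 'a) \<Rightarrow> 'a \<Rightarrow> bool" where
  "stable_PR_near M ip sc U xf x \<longleftrightarrow> (\<exists>C>0. C_stable_PR_near M ip sc U xf C x)"

end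

theory Submission
  imports Defs
begin

text \<open>Given x0 and \<epsilon>, take an orthonormal sequence orthogonal to x0 and put
  x = x0 + \<Sum>k. c_k h_k with c_(k+1) = c_k / (2(k+1)), so that the tail after the n-th term has
  norm at most c_n/(n+1). The h_k = e_(m_k) are picked one at a time: since \<langle>e_m, x_t\<rangle> \<rightarrow> 0 for every
  t, dominated convergence yields an index m_n for which the frame coefficients of c_n h_n and of the
  partial sum x_n = x0 + \<Sum>k<n. c_k h_k hardly overlap,
  \<integral> min(|\<langle>x_n, x_t\<rangle>|, c_n |\<langle>h_n, x_t\<rangle>|)^2 \<le> (c_n/(n+1))^2.
  Flipping the sign of the n-th term, y_n = x - 2 c_n h_n, then moves |\<Theta>x| by only O(c_n/(n+1)) in
  L_2, while y_n stays at distance at least 2 c_n from every \<lambda>x with |\<lambda>| = 1. Hence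
  \<Psi>(x, y_n) = O(1/n) as y_n \<rightarrow> x, so stability fails at x, which lies within \<epsilon> of x0.\<close>

(* The library versions of this lemma and the next assume class banach, which the sort
   {real_normed_vector, complete_space} of the spaces treated here does not entail. *)
lemma summable_norm_cancel':
  fixes f :: "nat \<Rightarrow> 'a::{real_normed_vector,complete_space}"
  assumes "summable (\<lambda>n. norm (f n))"
  shows "summable f"
proof -
  have "Cauchy (\<lambda>n. \<Sum>i<n. f i)"
  proof (rule CauchyI)
    fix e :: real assume "0 < e"
    then obtain N where N: "\<And>m n. m \<ge> N \<Longrightarrow> norm (\<Sum>i\<in>{m..<n}. norm (f i)) < e"
      using assms unfolding summable_Cauchy by blast
    have "norm ((\<Sum>i<m. f i) - (\<Sum>i<n. f i)) < e" if "N \<le> m" "m \<le> n" for m n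
    proof -
      have "norm ((\<Sum>i<m. f i) - (\<Sum>i<n. f i)) = norm (\<Sum>i\<in>{m..<n}. f i)"
        using that by (simp add: sum_diff_nat_ivl[symmetric, of 0 m n] atLeast0LessThan norm_minus_commute)
      also have "\<dots> \<le> (\<Sum>i\<in>{m..<n}. norm (f i))" by (rule norm_sum)
      also have "\<dots> < e" using N[OF that(1), of n] by simp
      finally show ?thesis .
    qed
    then show "\<exists>M. \<forall>m\<ge>M. \<forall>n\<ge>M. norm ((\<Sum>i<m. f i) - (\<Sum>i<n. f i)) < e"
      by (metis nle_le norm_minus_commute)
  qed
  then show ?thesis by (simp add: summable_iff_convergent Cauchy_convergent)
qed

lemma norm_suminf_le':
  fixes f :: "nat \<Rightarrow> 'a::{real_normed_vector,complete_space}"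
  assumes le: "\<And>n. norm (f n) \<le> g n" and g: "summable g"
  shows "norm (suminf f) \<le> suminf g"
proof -
  have "summable (\<lambda>n. norm (f n))"
    by (rule summable_comparison_test[OF _ g]) (use le in auto)
  then have "(\<lambda>n. norm (\<Sum>i<n. f i)) \<longlonglongrightarrow> norm (suminf f)"
    by (intro tendsto_norm summable_LIMSEQ) (rule summable_norm_cancel')
  moreover have "norm (\<Sum>i<n. f i) \<le> suminf g" for n
  proof -
    have "norm (\<Sum>i<n. f i) \<le> (\<Sum>i<n. g i)"
      by (rule order_trans[OF norm_sum sum_mono[OF le]])
    also have "\<dots> \<le> suminf g"
      using g le by (intro sum_le_suminf) (auto intro: order_trans[OF norm_ge_zero])
    finally show ?thesis .
  qed
  ultimately show ?thesis by (intro LIMSEQ_le_const2) auto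
qed

lemma summable_unit_series:
  fixes h :: "nat \<Rightarrow> 'a::{real_normed_vector,complete_space}"
  assumes unit: "\<And>k. norm (h k) = 1" and c: "\<And>k. 0 \<le> c k" "summable c"
  shows "summable (\<lambda>k. c k *\<^sub>R h k)" and "norm (\<Sum>k. c k *\<^sub>R h k) \<le> suminf c"
proof -
  have norm_term: "norm (c k *\<^sub>R h k) = c k" for k
    using c(1)[of k] unit[of k] by simp
  show "summable (\<lambda>k. c k *\<^sub>R h k)"
    by (rule summable_norm_cancel') (simp only: norm_term c(2))
  show "norm (\<Sum>k. c k *\<^sub>R h k) \<le> suminf c"
    by (rule norm_suminf_le') (simp_all only: norm_term order_refl c(2))
qed

lemma Liminf_antimono_filter:
  assumes "F \<le> G"
  shows "Liminf G f \<le> Liminf F f"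
  unfolding Liminf_def using assms by (auto intro!: SUP_subset_mono dest: filter_leD)

lemma nat_prefix_choice:
  fixes R :: "nat \<Rightarrow> (nat \<Rightarrow> 'b) \<Rightarrow> 'b \<Rightarrow> bool"
  assumes ex: "\<And>n f. \<exists>v. R n f v"
    and prefix: "\<And>n f g v. (\<And>i. i < n \<Longrightarrow> f i = g i) \<Longrightarrow> R n f v \<Longrightarrow> R n g v"
  shows "\<exists>F. \<forall>n. R n F (F n)"
proof -
  obtain pick where pick: "\<And>n f. R n f (pick n f)" using ex by metis
  define G where "G = rec_nat (\<lambda>_. undefined) (\<lambda>n g. g(n := pick n g))"
  have G_Suc: "G (Suc n) = (G n)(n := pick n (G n))" for n
    by (simp add: G_def)
  have G_stable: "G n i = G (Suc i) i" if "i < n" for n i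
    using that by (induction n) (auto simp: G_Suc less_Suc_eq)
  define F where "F n = G (Suc n) n" for n
  have "R n F (F n)" for n
  proof (rule prefix[of n "G n"])
    show "G n i = F i" if "i < n" for i
      unfolding F_def using G_stable[OF that] .
    show "R n (G n) (F n)" using pick by (simp add: F_def G_Suc)
  qed
  then show ?thesis by blast
qed

lemma halving_seq_le:
  fixes c :: "nat \<Rightarrow> real"
  assumes "\<And>k. c (Suc k) \<le> c k / 2"
  shows "c k \<le> c 0 * (1/2) ^ k"
proof (induction k)
  case (Suc k)
  have "c (Suc k) \<le> c k / 2" by (rule assms)
  also have "\<dots> \<le> c 0 * (1/2) ^ k / 2" using Suc.IH by simp
  finally show ?case by simp
qed simp

lemma halving_seq_summable:
  fixes c :: "nat \<Rightarrow> real"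
  assumes nonneg: "\<And>k. 0 \<le> c k" and half: "\<And>k. c (Suc k) \<le> c k / 2"
  shows "summable c" and "suminf c \<le> 2 * c 0"
proof -
  have geom: "summable (\<lambda>k. c 0 * (1/2) ^ k)" by simp
  show "summable c"
    using nonneg halving_seq_le[of c, OF half] by (intro summable_comparison_test[OF _ geom]) auto
  then have "suminf c \<le> (\<Sum>k. c 0 * (1/2) ^ k)"
    using halving_seq_le[of c, OF half] geom by (intro suminf_le) auto
  also have "\<dots> = 2 * c 0" by (simp add: suminf_mult suminf_geometric)
  finally show "suminf c \<le> 2 * c 0" .
qed

lemma factorial_decay_weights:
  fixes c :: "nat \<Rightarrow> real"
  assumes pos: "\<And>k. 0 < c k" and c_Suc: "\<And>k. c (Suc k) = c k / (2 * (real k + 1))"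
  shows "summable c" and "suminf c \<le> 2 * c 0" and "c n \<le> c 0"
    and "(\<Sum>j. c (j + Suc n)) \<le> c n / (real n + 1)"
proof -
  have half: "c (Suc k) \<le> c k / 2" for k
    unfolding c_Suc using pos[of k] by (intro divide_left_mono) auto
  have nonneg: "0 \<le> c k" for k using pos[of k] by simp
  show "summable c" "suminf c \<le> 2 * c 0"
    using halving_seq_summable[of c, OF nonneg half] by auto
  have "c n \<le> c 0 * (1/2) ^ n"
    by (rule halving_seq_le[of c, OF half])
  also have "\<dots> \<le> c 0"
    using nonneg[of 0] by (intro mult_left_le) (simp_all add: power_le_one)
  finally show "c n \<le> c 0" .
  have "(\<Sum>j. c (j + Suc n)) \<le> 2 * c (0 + Suc n)"
  proof (rule halving_seq_summable(2))
    show "0 \<le> c (k + Suc n)" for k by (rule nonneg)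
    show "c (Suc k + Suc n) \<le> c (k + Suc n) / 2" for k using half[of "k + Suc n"] by simp
  qed
  also have "\<dots> = c n / (real n + 1)"
    by (simp add: c_Suc field_simps)
  finally show "(\<Sum>j. c (j + Suc n)) \<le> c n / (real n + 1)" .
qed

lemma norm_plus_minus_diff_le:
  fixes p q s :: "'a::real_normed_vector"
  shows "(norm (p + s + q) - norm (p + s - q))\<^sup>2 \<le> 8 * (min (norm p) (norm q))\<^sup>2 + 8 * (norm s)\<^sup>2"
proof -
  have by_q: "\<bar>norm (p + s + q) - norm (p + s - q)\<bar> \<le> 2 * norm q"
    using norm_triangle_ineq3[of "p + s + q" "p + s - q"] by (simp add: scaleR_2[symmetric])
  have "\<bar>norm (p + s + q) - norm (p + s - q)\<bar> = \<bar>norm (p + s + q) - norm (- (p + s - q))\<bar>"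
    by (simp only: norm_minus_cancel)
  also have "\<dots> \<le> norm ((p + s + q) - (- (p + s - q)))"
    by (rule norm_triangle_ineq3)
  also have "\<dots> = norm (2 *\<^sub>R (p + s))"
    by (simp add: scaleR_2 algebra_simps)
  also have "\<dots> \<le> 2 * norm p + 2 * norm s"
    using norm_triangle_ineq[of p s] by simp
  finally have "\<bar>norm (p + s + q) - norm (p + s - q)\<bar> \<le> 2 * min (norm p) (norm q) + 2 * norm s"
    using by_q norm_ge_zero[of s] unfolding min_def by (smt (verit))
  then have "(norm (p + s + q) - norm (p + s - q))\<^sup>2 \<le> (2 * min (norm p) (norm q) + 2 * norm s)\<^sup>2"
    by (metis abs_ge_zero power2_abs power_mono)
  also have "\<dots> \<le> 8 * (min (norm p) (norm q))\<^sup>2 + 8 * (norm s)\<^sup>2"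
    using zero_le_power2[of "2 * min (norm p) (norm q) - 2 * norm s"]
    by (simp add: power2_eq_square algebra_simps)
  finally show ?thesis .
qed

lemma nn_integral_norm_plus_minus_diff_le:
  fixes p q s :: "'m \<Rightarrow> 'a::real_normed_vector"
  assumes [measurable]: "p \<in> borel_measurable M" "q \<in> borel_measurable M" "s \<in> borel_measurable M"
    and "0 \<le> a" "0 \<le> b"
    and pq: "(\<integral>\<^sup>+ t. ennreal ((min (norm (p t)) (norm (q t)))\<^sup>2) \<partial>M) \<le> ennreal a"
    and s: "(\<integral>\<^sup>+ t. ennreal ((norm (s t))\<^sup>2) \<partial>M) \<le> ennreal b"
  shows "(\<integral>\<^sup>+ t. ennreal ((norm (p t + s t + q t) - norm (p t + s t - q t))\<^sup>2) \<partial>M)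
           \<le> ennreal (8 * (a + b))"
proof -
  have "(\<integral>\<^sup>+ t. ennreal ((norm (p t + s t + q t) - norm (p t + s t - q t))\<^sup>2) \<partial>M)
      \<le> (\<integral>\<^sup>+ t. 8 * ennreal ((min (norm (p t)) (norm (q t)))\<^sup>2) + 8 * ennreal ((norm (s t))\<^sup>2) \<partial>M)"
  proof (rule nn_integral_mono)
    fix t
    have "ennreal ((norm (p t + s t + q t) - norm (p t + s t - q t))\<^sup>2)
        \<le> ennreal (8 * (min (norm (p t)) (norm (q t)))\<^sup>2 + 8 * (norm (s t))\<^sup>2)"
      by (rule ennreal_leI[OF norm_plus_minus_diff_le])
    then show "ennreal ((norm (p t + s t + q t) - norm (p t + s t - q t))\<^sup>2)
        \<le> 8 * ennreal ((min (norm (p t)) (norm (q t)))\<^sup>2) + 8 * ennreal ((norm (s t))\<^sup>2)"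
      by (simp add: ennreal_plus ennreal_mult)
  qed
  also have "\<dots> = 8 * (\<integral>\<^sup>+ t. ennreal ((min (norm (p t)) (norm (q t)))\<^sup>2) \<partial>M)
                  + 8 * (\<integral>\<^sup>+ t. ennreal ((norm (s t))\<^sup>2) \<partial>M)"
    by (simp add: nn_integral_add nn_integral_cmult)
  also have "\<dots> \<le> 8 * ennreal a + 8 * ennreal b"
    using pq s by (intro add_mono mult_left_mono) auto
  also have "\<dots> = ennreal (8 * (a + b))"
    using assms(4,5) by (simp add: ennreal_mult' ennreal_plus distrib_left)
  finally show ?thesis .
qed

lemma Psi_bounds:
  assumes "abs_analysis_dist M ip xf x y \<le> a" and "0 < b" and "b \<le> phase_dist sc U x y"
  shows "0 \<le> Psi M ip sc U xf x y" and "Psi M ip sc U xf x y \<le> a / b"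
proof -
  have "0 \<le> abs_analysis_dist M ip xf x y" by (simp add: abs_analysis_dist_def)
  with assms show "0 \<le> Psi M ip sc U xf x y" "Psi M ip sc U xf x y \<le> a / b"
    unfolding Psi_def by (auto intro: frac_le)
qed

lemma not_stable_PR_near_if_Psi_tendsto_zero:
  assumes "y \<longlonglongrightarrow> x"
    and "\<forall>\<^sub>F n in sequentially. y n \<notin> (\<lambda>l. sc l x) ` U \<and> y n \<noteq> x"
    and "(\<lambda>n. Psi M ip sc U xf x (y n)) \<longlonglongrightarrow> 0"
  shows "\<not> stable_PR_near M ip sc U xf x"
proof
  assume "stable_PR_near M ip sc U xf x"
  then obtain C where "Liminf (at x within - ((\<lambda>l. sc l x) ` U)) (\<lambda>z. ereal (C * Psi M ip sc U xf x z)) \<ge> 1"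
    unfolding stable_PR_near_def C_stable_PR_near_def by blast
  also have "filtermap y sequentially \<le> at x within - ((\<lambda>l. sc l x) ` U)"
    using assms(1,2) unfolding filterlim_def[symmetric] filterlim_at by auto
  then have "Liminf (at x within - ((\<lambda>l. sc l x) ` U)) (\<lambda>z. ereal (C * Psi M ip sc U xf x z))
      \<le> Liminf sequentially (\<lambda>n. ereal (C * Psi M ip sc U xf x (y n)))"
    by (rule order_trans[OF Liminf_antimono_filter Liminf_filtermap_le])
  also have "\<dots> = 0"
    using assms(3) by (intro lim_imp_Liminf) (auto intro!: tendsto_mult_right_zero simp: zero_ereal_def)
  finally show False by simp
qed

text \<open>Real and complex Hilbert spaces are treated uniformly: the scalars \<open>'k\<close> carry a conjugation
  \<open>cj\<close> (\<open>id\<close> on the reals, \<open>cnj\<close> on the complex numbers), \<open>sc\<close> extends \<open>scaleR\<close>, and the inner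
  product \<open>ip\<close>, linear in its first argument, induces the given norm.\<close>
locale hilbert_structure =
  fixes sc :: "'k::{real_normed_field,second_countable_topology} \<Rightarrow> 'a::{real_normed_vector,complete_space} \<Rightarrow> 'a"
    and ip :: "'a \<Rightarrow> 'a \<Rightarrow> 'k" and cj :: "'k \<Rightarrow> 'k"
  assumes sc_add: "sc a (x + y) = sc a x + sc a y"
    and sc_add_left: "sc (a + b) x = sc a x + sc b x"
    and sc_mult: "sc (a * b) x = sc a (sc b x)"
    and sc_one: "sc 1 x = x"
    and sc_of_real: "sc (of_real r) x = r *\<^sub>R x"
    and ip_add: "ip (x + y) z = ip x z + ip y z"
    and ip_sc: "ip (sc c x) y = c * ip x y"
    and ip_sym: "ip y x = cj (ip x y)"
    and ip_self: "ip x x = of_real ((norm x)\<^sup>2)"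
    and cj_add: "cj (a + b) = cj a + cj b"
    and cj_mult: "cj (a * b) = cj a * cj b"
    and cj_of_real: "cj (of_real r) = of_real r"
    and cj_cj: "cj (cj a) = a"
    and mult_cj: "a * cj a = of_real ((norm a)\<^sup>2)"
begin

lemma cj_zero [simp]: "cj 0 = 0"
  using cj_add[of 0 0] by simp

lemma cj_one [simp]: "cj 1 = 1"
  using cj_of_real[of 1] by simp

lemma cj_minus: "cj (- a) = - cj a"
  using cj_add[of a "- a"] by (simp add: eq_neg_iff_add_eq_0 add.commute)

lemma cj_diff: "cj (a - b) = cj a - cj b"
  using cj_add[of a "- b"] cj_minus[of b] by simp

lemma norm_cj: "norm (cj a) = norm a"
proof -
  have "of_real ((norm a)\<^sup>2) = (of_real ((norm (cj a))\<^sup>2) :: 'k)"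
    using mult_cj[of a] mult_cj[of "cj a"] cj_cj[of a] by (simp add: mult.commute)
  then have "(norm a)\<^sup>2 = (norm (cj a))\<^sup>2" using of_real_eq_iff by blast
  then show ?thesis by (simp add: power2_eq_iff_nonneg)
qed

lemma ip_zero [simp]: "ip 0 z = 0"
  using ip_add[of 0 0 z] by simp

lemma ip_minus: "ip (- x) z = - ip x z"
  using ip_add[of x "- x" z] by (simp add: eq_neg_iff_add_eq_0 add.commute)

lemma ip_diff: "ip (x - y) z = ip x z - ip y z"
  using ip_add[of x "- y" z] ip_minus[of y z] by simp

lemma ip_scaleR: "ip (r *\<^sub>R x) z = of_real r * ip x z"
  using ip_sc[of "of_real r" x z] sc_of_real by simp

lemma ip_sum: "ip (\<Sum>i\<in>A. f i) z = (\<Sum>i\<in>A. ip (f i) z)"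
  by (induction A rule: infinite_finite_induct) (auto simp: ip_add)

lemma ip_add_right: "ip z (x + y) = ip z x + ip z y"
  by (metis cj_add ip_add ip_sym)

lemma ip_zero_right [simp]: "ip z 0 = 0"
  using ip_sym[of z 0] by simp

lemma ip_diff_right: "ip z (x - y) = ip z x - ip z y"
  by (metis cj_diff ip_diff ip_sym)

lemma ip_sc_right: "ip x (sc c y) = cj c * ip x y"
  by (metis cj_mult ip_sc ip_sym)

lemma ip_scaleR_right: "ip x (r *\<^sub>R y) = of_real r * ip x y"
  using ip_sc_right[of x "of_real r" y] sc_of_real cj_of_real by simp

lemma norm_ip_commute: "norm (ip x y) = norm (ip y x)"
  by (simp add: ip_sym[of x y] norm_cj)

lemma sc_zero [simp]: "sc a 0 = 0"
  using sc_add[of a 0 0] by simp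

lemma sc_minus: "sc a (- x) = - sc a x"
  using sc_add[of a x "- x"] by (simp add: eq_neg_iff_add_eq_0 add.commute)

lemma sc_diff: "sc a (x - y) = sc a x - sc a y"
  using sc_add[of a x "- y"] sc_minus[of a y] by simp

lemma sc_diff_left: "sc (a - b) x = sc a x - sc b x"
  using sc_add_left[of "a - b" b x] by (simp add: eq_diff_eq)

lemma norm_sc: "norm (sc a x) = norm a * norm x"
proof -
  have "ip (sc a x) (sc a x) = a * cj a * ip x x"
    by (simp add: ip_sc ip_sc_right mult.assoc mult.left_commute)
  then have "(of_real ((norm (sc a x))\<^sup>2) :: 'k) = of_real ((norm a * norm x)\<^sup>2)"
    by (simp add: mult_cj ip_self power_mult_distrib)
  then have "(norm (sc a x))\<^sup>2 = (norm a * norm x)\<^sup>2" using of_real_eq_iff by blast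
  then show ?thesis by (simp add: power2_eq_iff_nonneg)
qed

lemma pythagoras:
  assumes "ip a b = 0"
  shows "(norm (a + b))\<^sup>2 = (norm a)\<^sup>2 + (norm b)\<^sup>2"
proof -
  have "ip b a = 0" using assms ip_sym[of b a] by simp
  then have "ip (a + b) (a + b) = ip a a + ip b b"
    using assms by (simp add: ip_add ip_add_right)
  then have "(of_real ((norm (a + b))\<^sup>2) :: 'k) = of_real ((norm a)\<^sup>2 + (norm b)\<^sup>2)"
    by (simp add: ip_self)
  then show ?thesis using of_real_eq_iff by blast
qed

definition orthonormal :: "(nat \<Rightarrow> 'a) \<Rightarrow> nat set \<Rightarrow> bool" where
  "orthonormal e I \<longleftrightarrow> (\<forall>i\<in>I. \<forall>j\<in>I. ip (e i) (e j) = (if i = j then 1 else 0))"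

lemma orthonormal_norm:
  assumes "orthonormal e I" "i \<in> I"
  shows "norm (e i) = 1"
proof -
  have "ip (e i) (e i) = 1"
    using assms by (simp add: orthonormal_def)
  then have "(norm (e i))\<^sup>2 = 1"
    by (simp only: ip_self of_real_eq_1_iff)
  then show ?thesis
    using norm_ge_zero[of "e i"] by (auto simp: power2_eq_1_iff)
qed

lemma bessel_inequality:
  assumes "orthonormal e {..<N}"
  shows "(\<Sum>i<N. (norm (ip z (e i)))\<^sup>2) \<le> (norm z)\<^sup>2"
proof -
  have on: "ip (e i) (e j) = (if i = j then 1 else 0)" if "i < N" "j < N" for i j
    using assms that by (simp add: orthonormal_def)
  define a where "a i = ip z (e i)" for i
  define s where "s = (\<Sum>i<N. (norm (a i))\<^sup>2)"
  \<comment> \<open>the orthogonal projection of z, with norm (z - w)^2 = (norm z)^2 - s\<close>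
  define w where "w = (\<Sum>i<N. sc (a i) (e i))"
  have w_e: "ip w (e j) = a j" if "j < N" for j
  proof -
    have "ip w (e j) = (\<Sum>i<N. if i = j then a i else 0)"
      unfolding w_def ip_sum ip_sc using that by (intro sum.cong) (auto simp: on)
    then show ?thesis using that by simp
  qed
  have w_z: "ip w z = of_real s"
    by (simp add: w_def ip_sum ip_sc a_def s_def mult_cj ip_sym[of "e _" z])
  have z_w: "ip z w = of_real s"
    using w_z ip_sym[of z w] cj_of_real by simp
  have w_w: "ip w w = of_real s"
  proof -
    have "ip w w = (\<Sum>i<N. a i * ip (e i) w)"
      by (simp add: w_def ip_sum ip_sc)
    also have "\<dots> = (\<Sum>i<N. a i * cj (a i))"
      by (intro sum.cong) (auto simp: ip_sym[of "e _" w] w_e)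
    finally show ?thesis by (simp add: mult_cj s_def)
  qed
  have "(of_real ((norm (z - w))\<^sup>2) :: 'k) = ip z z - ip w z - (ip z w - ip w w)"
    by (simp only: ip_self[symmetric] ip_diff ip_diff_right)
  also have "\<dots> = of_real ((norm z)\<^sup>2 - s)"
    by (simp only: w_z z_w w_w ip_self[of z] of_real_diff) simp
  finally have "(norm (z - w))\<^sup>2 = (norm z)\<^sup>2 - s"
    using of_real_eq_iff by blast
  then show ?thesis
    unfolding s_def a_def by (smt (verit) zero_le_power2)
qed

lemma cauchy_schwarz: "norm (ip x y) \<le> norm x * norm y"
proof (cases "y = 0")
  case False
  define u where "u = (1 / norm y) *\<^sub>R y"
  have "orthonormal (\<lambda>_. u) {..<1}"
    using False by (simp add: orthonormal_def u_def ip_scaleR ip_scaleR_right ip_self power2_eq_square)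
  then have "(norm (ip x u))\<^sup>2 \<le> (norm x)\<^sup>2"
    using bessel_inequality[of "\<lambda>_. u" 1 x] by simp
  then have "norm (ip x u) \<le> norm x"
    by (rule power2_le_imp_le) simp
  moreover have "norm (ip x u) = norm (ip x y) / norm y"
    unfolding u_def ip_scaleR_right norm_mult by (simp add: norm_divide)
  ultimately show ?thesis
    using False by (simp add: pos_divide_le_eq)
qed simp

lemma bounded_linear_ip: "bounded_linear (\<lambda>x. ip x z)"
proof (rule bounded_linear_intro)
  show "ip (x + y) z = ip x z + ip y z" for x y by (rule ip_add)
  show "ip (r *\<^sub>R x) z = r *\<^sub>R ip x z" for r x by (simp add: ip_scaleR scaleR_conv_of_real)
  show "norm (ip x z) \<le> norm x * norm z" for x by (rule cauchy_schwarz)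
qed

lemma ip_suminf: "summable f \<Longrightarrow> ip (suminf f) z = (\<Sum>n. ip (f n) z)"
  by (rule bounded_linear.suminf[OF bounded_linear_ip])

lemma ip_orthonormal_tendsto_zero:
  assumes "orthonormal e UNIV"
  shows "(\<lambda>i. ip z (e i)) \<longlonglongrightarrow> 0"
proof -
  have "summable (\<lambda>i. (norm (ip z (e i)))\<^sup>2)"
  proof (rule bounded_imp_summable)
    show "(\<Sum>k\<le>n. (norm (ip z (e k)))\<^sup>2) \<le> (norm z)\<^sup>2" for n
      using assms bessel_inequality[of e "Suc n" z]
      by (simp add: lessThan_Suc_atMost orthonormal_def)
  qed simp
  then have "(\<lambda>i. sqrt ((norm (ip z (e i)))\<^sup>2)) \<longlonglongrightarrow> sqrt 0"
    by (intro tendsto_real_sqrt summable_LIMSEQ_zero)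
  then show ?thesis by (simp add: tendsto_norm_zero_iff)
qed

lemma exists_unit_orthogonal:
  assumes "infinite_dim sc" and on: "orthonormal f {..<n}"
  shows "\<exists>u. norm u = 1 \<and> (\<forall>j<n. ip u (f j) = 0)"
proof -
  have inj: "inj_on f {..<n}"
    using on by (intro inj_onI) (metis orthonormal_def one_neq_zero)
  obtain v where v: "\<And>c. v \<noteq> (\<Sum>s\<in>f ` {..<n}. sc (c s) s)"
    using assms(1) unfolding infinite_dim_def by blast
  define w where "w = v - (\<Sum>i<n. sc (ip v (f i)) (f i))"
  have "w \<noteq> 0"
    using v[of "\<lambda>s. ip v s"] sum.reindex[OF inj, of "\<lambda>s. sc (ip v s) s"] by (simp add: w_def)
  moreover have "ip w (f j) = 0" if "j < n" for j
  proof -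
    have "(\<Sum>i<n. ip v (f i) * ip (f i) (f j)) = (\<Sum>i<n. if i = j then ip v (f i) else 0)"
      using on that by (intro sum.cong) (auto simp: orthonormal_def)
    then show ?thesis using that by (simp add: w_def ip_diff ip_sum ip_sc)
  qed
  ultimately show ?thesis
    by (intro exI[of _ "(1 / norm w) *\<^sub>R w"]) (simp add: ip_scaleR)
qed

lemma exists_orthonormal_seq_from:
  assumes inf: "infinite_dim sc" and e0: "norm e0 = 1"
  shows "\<exists>e. orthonormal e UNIV \<and> e 0 = e0"
proof -
  define R where "R n f v \<longleftrightarrow> orthonormal f {..<n} \<longrightarrow>
      norm v = 1 \<and> (\<forall>j<n. ip v (f j) = 0) \<and> (n = 0 \<longrightarrow> v = e0)" for n f v
  have "\<exists>e. \<forall>n. R n e (e n)"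
  proof (rule nat_prefix_choice)
    show "\<exists>v. R n f v" for n f
      using exists_unit_orthogonal[OF inf, of f n] e0 by (cases n) (auto simp: R_def)
    show "R n g v" if "\<And>i. i < n \<Longrightarrow> f i = g i" "R n f v" for n f g v
      using that by (simp add: R_def orthonormal_def)
  qed
  then obtain e where e: "\<And>n. R n e (e n)" by blast
  have on: "orthonormal e {..<n}" for n
  proof (induction n)
    case (Suc n)
    then have unit: "ip (e n) (e n) = 1" and orth: "\<And>j. j < n \<Longrightarrow> ip (e n) (e j) = 0"
      using e[of n] by (auto simp: R_def ip_self)
    have "ip (e j) (e n) = 0" if "j < n" for j
      using orth[OF that] by (simp add: ip_sym[of "e j" "e n"])
    with Suc unit orth show ?case
      unfolding orthonormal_def by (auto simp: less_Suc_eq)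
  qed (simp add: orthonormal_def)
  have "orthonormal e UNIV"
    unfolding orthonormal_def
  proof (intro ballI)
    fix i j :: nat
    show "ip (e i) (e j) = (if i = j then 1 else 0)"
      using on[of "Suc (max i j)"] by (simp add: orthonormal_def)
  qed
  moreover have "e 0 = e0" using e[of 0] by (simp add: R_def orthonormal_def)
  ultimately show ?thesis by blast
qed

lemma exists_orthonormal_seq_orthogonal:
  assumes "infinite_dim sc"
  shows "\<exists>h. orthonormal h UNIV \<and> (\<forall>k. ip x0 (h k) = 0)"
proof -
  obtain u :: 'a where u: "norm u = 1"
    using exists_unit_orthogonal[OF assms, of _ 0] by (auto simp: orthonormal_def)
  define e0 where "e0 = (if x0 = 0 then u else (1 / norm x0) *\<^sub>R x0)"
  have "norm e0 = 1" using u by (simp add: e0_def)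
  then obtain e where e: "orthonormal e UNIV" "e 0 = e0"
    using exists_orthonormal_seq_from[OF assms] by blast
  have x0: "x0 = norm x0 *\<^sub>R e 0"
    using e(2) by (simp add: e0_def)
  have "ip x0 (e (Suc k)) = 0" for k
    using e(1) by (subst x0) (simp add: ip_scaleR orthonormal_def)
  moreover have "orthonormal (e \<circ> Suc) UNIV"
    using e(1) by (simp add: orthonormal_def)
  ultimately show ?thesis by auto
qed

lemma norm_phase_diff_ge:
  assumes ab: "ip a b = 0" and ba: "norm b \<le> norm a" and l: "norm l = 1"
  shows "2 * norm b \<le> norm ((a + b) - sc l (a - b))"
proof -
  have eq: "(a + b) - sc l (a - b) = sc (1 - l) a + sc (1 + l) b"
    by (simp add: sc_diff sc_diff_left sc_add_left sc_one algebra_simps)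
  have orth: "ip (sc (1 - l) a) (sc (1 + l) b) = 0"
    by (simp add: ip_sc ip_sc_right ab)
  have "(of_real ((norm (1 - l))\<^sup>2 + (norm (1 + l))\<^sup>2) :: 'k) = (1 - l) * cj (1 - l) + (1 + l) * cj (1 + l)"
    by (simp add: mult_cj)
  also have "\<dots> = 2 + 2 * (l * cj l)"
    by (simp add: cj_diff cj_add algebra_simps)
  also have "\<dots> = of_real 4" by (simp add: mult_cj l)
  finally have four: "(norm (1 - l))\<^sup>2 + (norm (1 + l))\<^sup>2 = 4"
    using of_real_eq_iff by blast
  have "(2 * norm b)\<^sup>2 = ((norm (1 - l))\<^sup>2 + (norm (1 + l))\<^sup>2) * (norm b)\<^sup>2"
    using four by simp
  also have "\<dots> = (norm (1 - l) * norm b)\<^sup>2 + (norm (1 + l) * norm b)\<^sup>2"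
    by (simp add: power_mult_distrib algebra_simps)
  also have "\<dots> \<le> (norm (1 - l) * norm a)\<^sup>2 + (norm (1 + l) * norm b)\<^sup>2"
    using ba by (intro add_mono power_mono mult_left_mono) auto
  also have "\<dots> = (norm ((a + b) - sc l (a - b)))\<^sup>2"
    unfolding eq pythagoras[OF orth] by (simp add: norm_sc)
  finally show ?thesis by (rule power2_le_imp_le) simp
qed

lemma not_in_orbit_if_phase_dist_pos:
  assumes "0 < phase_dist sc {l. norm l = 1} x y"
  shows "y \<notin> (\<lambda>l. sc l x) ` {l. norm l = 1}"
proof
  assume "y \<in> (\<lambda>l. sc l x) ` {l. norm l = 1}"
  then obtain l where l: "norm l = 1" "y = sc l x" by auto
  then have "l \<noteq> 0" by auto
  with l have "sc (inverse l) y = x" "norm (inverse l) = 1"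
    by (simp_all add: sc_mult[symmetric] sc_one norm_inverse)
  then have "phase_dist sc {l. norm l = 1} x y \<le> norm (x - x)"
    unfolding phase_dist_def by (intro cInf_lower bdd_belowI[of _ 0]) force+
  with assms show False by simp
qed

lemma ip_orthonormal_series:
  assumes on: "orthonormal h UNIV" and x0: "\<forall>k. ip x0 (h k) = 0"
    and summ: "summable (\<lambda>k. c k *\<^sub>R h k)"
  shows "ip (x0 + (\<Sum>k. c k *\<^sub>R h k)) (h j) = of_real (c j)"
proof -
  have "ip (\<Sum>k. c k *\<^sub>R h k) (h j) = (\<Sum>k. of_real (c k) * ip (h k) (h j))"
    by (simp add: ip_suminf[OF summ] ip_scaleR)
  also have "\<dots> = (\<Sum>k. if k = j then of_real (c k) else 0)"
    using on by (intro suminf_cong) (simp add: orthonormal_def)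
  also have "\<dots> = of_real (c j)"
    by (rule sums_unique[OF sums_single, symmetric])
  finally show ?thesis using x0 by (simp add: ip_add)
qed

lemma phase_dist_orthonormal_series_ge:
  assumes on: "orthonormal h UNIV" and x0: "\<forall>k. ip x0 (h k) = 0"
    and summ: "summable (\<lambda>k. c k *\<^sub>R h k)" and c: "0 \<le> c n" "c n \<le> c 0" and "n \<noteq> 0"
  defines "x \<equiv> x0 + (\<Sum>k. c k *\<^sub>R h k)"
  shows "2 * c n \<le> phase_dist sc {l. norm l = 1} x (x - (2 * c n) *\<^sub>R h n)"
proof -
  define b where "b = c n *\<^sub>R h n"
  define a where "a = x - b"
  have a_h: "ip a (h j) = of_real (c j) - of_real (c n) * ip (h n) (h j)" for j
    using ip_orthonormal_series[OF on x0 summ]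
    by (simp add: a_def b_def x_def ip_diff ip_scaleR)
  have "ip a b = 0"
    using a_h[of n] on by (simp add: b_def ip_scaleR_right orthonormal_def)
  moreover have "norm b \<le> norm a"
  proof -
    have "norm b = c n" using c orthonormal_norm[OF on] by (simp add: b_def)
    also have "\<dots> \<le> norm (ip a (h 0))"
      \<comment> \<open>as n \<noteq> 0, the h 0 component of a is still c 0\<close>
      using a_h[of 0] on c \<open>n \<noteq> 0\<close> by (simp add: orthonormal_def)
    also have "\<dots> \<le> norm a"
      using cauchy_schwarz[of a "h 0"] orthonormal_norm[OF on] by simp
    finally show ?thesis .
  qed
  ultimately have "2 * c n \<le> norm (x - sc l (x - (2 * c n) *\<^sub>R h n))" if "norm l = 1" for l
    using norm_phase_diff_ge[OF _ _ that, of a b] c orthonormal_norm[OF on]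
    by (simp add: a_def b_def algebra_simps flip: scaleR_add_left)
  then show ?thesis
    unfolding phase_dist_def by (intro cInf_greatest) (auto intro: exI[of _ 1])
qed

lemma abs_analysis_dist_perturbation_le:
  assumes meas: "\<And>y. (\<lambda>t. ip y (xf t)) \<in> borel_measurable M"
    and upper: "\<And>y. (\<integral>\<^sup>+ t. ennreal ((norm (ip y (xf t)))\<^sup>2) \<partial>M) \<le> ennreal (B * (norm y)\<^sup>2)"
    and "0 \<le> B"
    and overlap: "(\<integral>\<^sup>+ t. ennreal ((min (norm (ip u (xf t))) (norm (ip v (xf t))))\<^sup>2) \<partial>M) \<le> ennreal (\<delta>\<^sup>2)"
    and T: "norm T \<le> \<delta>"
  shows "abs_analysis_dist M ip xf (u + T + v) (u + T - v) \<le> sqrt (8 * (1 + B)) * \<delta>"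
proof -
  have "\<delta> \<ge> 0" using T norm_ge_zero order_trans by blast
  have "(\<integral>\<^sup>+ t. ennreal ((norm (ip T (xf t)))\<^sup>2) \<partial>M) \<le> ennreal (B * (norm T)\<^sup>2)"
    by (rule upper)
  also have "\<dots> \<le> ennreal (B * \<delta>\<^sup>2)"
    using T \<open>0 \<le> B\<close> by (intro ennreal_leI mult_left_mono power_mono) auto
  finally have "(\<integral>\<^sup>+ t. ennreal ((norm (ip (u + T + v) (xf t)) - norm (ip (u + T - v) (xf t)))\<^sup>2) \<partial>M)
      \<le> ennreal (8 * (1 + B) * \<delta>\<^sup>2)"
    using nn_integral_norm_plus_minus_diff_le[where p="\<lambda>t. ip u (xf t)" and q="\<lambda>t. ip v (xf t)"
        and s="\<lambda>t. ip T (xf t)" and a="\<delta>\<^sup>2" and b="B * \<delta>\<^sup>2", OF meas meas meas]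
      overlap \<open>0 \<le> B\<close> by (simp add: ip_add ip_diff algebra_simps)
  then have "abs_analysis_dist M ip xf (u + T + v) (u + T - v) \<le> sqrt (8 * (1 + B) * \<delta>\<^sup>2)"
    unfolding abs_analysis_dist_def using \<open>0 \<le> B\<close>
    by (intro real_sqrt_le_mono enn2real_leI) auto
  also have "\<dots> = sqrt (8 * (1 + B)) * \<delta>"
    using \<open>0 \<le> \<delta>\<close> by (simp add: real_sqrt_mult)
  finally show ?thesis .
qed

lemma nn_integral_min_ip_orthonormal_tendsto_zero:
  assumes meas: "\<And>y. (\<lambda>t. ip y (xf t)) \<in> borel_measurable M"
    and fin: "(\<integral>\<^sup>+ t. ennreal ((norm (ip z (xf t)))\<^sup>2) \<partial>M) < \<infinity>"
    and on: "orthonormal e UNIV"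
  shows "(\<lambda>v. \<integral>\<^sup>+ t. ennreal ((min (norm (ip z (xf t))) (norm (ip (a *\<^sub>R e v) (xf t))))\<^sup>2) \<partial>M)
           \<longlonglongrightarrow> 0"
proof -
  have [measurable]: "(\<lambda>t. ip y (xf t)) \<in> borel_measurable M" for y by (rule meas)
  have "(\<lambda>v. \<integral>\<^sup>+ t. ennreal ((min (norm (ip z (xf t))) (norm (ip (a *\<^sub>R e v) (xf t))))\<^sup>2) \<partial>M)
          \<longlonglongrightarrow> (\<integral>\<^sup>+ t. 0 \<partial>M)"
  proof (rule nn_integral_dominated_convergence[where w="\<lambda>t. ennreal ((norm (ip z (xf t)))\<^sup>2)"])
    show "AE t in M. ennreal ((min (norm (ip z (xf t))) (norm (ip (a *\<^sub>R e v) (xf t))))\<^sup>2)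
            \<le> ennreal ((norm (ip z (xf t)))\<^sup>2)" for v
      by (intro AE_I2 ennreal_leI power_mono) auto
    show "AE t in M. (\<lambda>v. ennreal ((min (norm (ip z (xf t))) (norm (ip (a *\<^sub>R e v) (xf t))))\<^sup>2))
            \<longlonglongrightarrow> 0"
    proof (rule AE_I2)
      fix t
      have "(\<lambda>v. norm (ip (xf t) (e v))) \<longlonglongrightarrow> 0"
        using ip_orthonormal_tendsto_zero[OF on] by (rule tendsto_norm_zero)
      then have "(\<lambda>v. norm (ip (a *\<^sub>R e v) (xf t))) \<longlonglongrightarrow> 0"
        by (simp add: ip_scaleR norm_mult norm_ip_commute[of "e _"] tendsto_mult_right_zero)
      then have "(\<lambda>v. ennreal ((min (norm (ip z (xf t))) (norm (ip (a *\<^sub>R e v) (xf t))))\<^sup>2))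
          \<longlonglongrightarrow> ennreal ((min (norm (ip z (xf t))) 0)\<^sup>2)"
        by (intro tendsto_intros)
      then show "(\<lambda>v. ennreal ((min (norm (ip z (xf t))) (norm (ip (a *\<^sub>R e v) (xf t))))\<^sup>2))
          \<longlonglongrightarrow> 0"
        by simp
    qed
  qed (use fin in auto)
  then show ?thesis by simp
qed

lemma exists_strict_mono_small_overlap:
  fixes c \<delta> :: "nat \<Rightarrow> real"
  assumes meas: "\<And>y. (\<lambda>t. ip y (xf t)) \<in> borel_measurable M"
    and fin: "\<And>y. (\<integral>\<^sup>+ t. ennreal ((norm (ip y (xf t)))\<^sup>2) \<partial>M) < \<infinity>"
    and on: "orthonormal e UNIV" and \<delta>: "\<And>n. 0 < \<delta> n"
  shows "\<exists>m. strict_mono m \<and>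
    (\<forall>n. (\<integral>\<^sup>+ t. ennreal ((min (norm (ip (u + (\<Sum>k<n. c k *\<^sub>R e (m k))) (xf t)))
                                   (norm (ip (c n *\<^sub>R e (m n)) (xf t))))\<^sup>2) \<partial>M)
           \<le> ennreal ((\<delta> n)\<^sup>2))"
proof -
  define R where "R n m v \<longleftrightarrow> (\<forall>i<n. m i < v) \<and>
    (\<integral>\<^sup>+ t. ennreal ((min (norm (ip (u + (\<Sum>k<n. c k *\<^sub>R e (m k))) (xf t)))
                              (norm (ip (c n *\<^sub>R e v) (xf t))))\<^sup>2) \<partial>M) \<le> ennreal ((\<delta> n)\<^sup>2)"
    for n m v
  have "\<exists>m. \<forall>n. R n m (m n)"
  proof (rule nat_prefix_choice)
    fix n and m :: "nat \<Rightarrow> nat"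
    have "\<forall>\<^sub>F v in sequentially.
        (\<integral>\<^sup>+ t. ennreal ((min (norm (ip (u + (\<Sum>k<n. c k *\<^sub>R e (m k))) (xf t)))
                                  (norm (ip (c n *\<^sub>R e v) (xf t))))\<^sup>2) \<partial>M) < ennreal ((\<delta> n)\<^sup>2)"
      using \<delta>[of n] by (intro order_tendstoD(2)[OF nn_integral_min_ip_orthonormal_tendsto_zero[OF meas fin on]]) simp
    moreover have "\<forall>\<^sub>F v in sequentially. (\<Sum>i<n. m i) < v"
      by (rule eventually_gt_at_top)
    ultimately have "\<forall>\<^sub>F v in sequentially. R n m v"
    proof eventually_elim
      case (elim v)
      have "m i < v" if "i < n" for i
        using member_le_sum[of i "{..<n}" m] that elim(2) by simp
      then show ?case using elim(1) by (simp add: R_def)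
    qed
    then show "\<exists>v. R n m v"
      using eventually_happens'[OF sequentially_bot] by blast
  next
    fix n m m' v
    assume prefix: "\<And>i. i < n \<Longrightarrow> m i = m' i" and "R n m v"
    moreover have "(\<Sum>k<n. c k *\<^sub>R e (m k)) = (\<Sum>k<n. c k *\<^sub>R e (m' k))"
      using prefix by (intro sum.cong) auto
    ultimately show "R n m' v" by (simp add: R_def)
  qed
  then obtain m where m: "\<And>n. R n m (m n)" by blast
  then have "strict_mono m"
    by (intro strict_monoI) (simp add: R_def)
  with m show ?thesis by (auto simp: R_def)
qed

lemma abs_analysis_dist_unit_series_le:
  assumes meas: "\<And>y. (\<lambda>t. ip y (xf t)) \<in> borel_measurable M"
    and upper: "\<And>y. (\<integral>\<^sup>+ t. ennreal ((norm (ip y (xf t)))\<^sup>2) \<partial>M) \<le> ennreal (B * (norm y)\<^sup>2)"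
    and "0 \<le> B" and unit: "\<And>k. norm (h k) = 1"
    and c_pos: "\<And>k. 0 < c k" and c_Suc: "\<And>k. c (Suc k) = c k / (2 * (real k + 1))"
    and overlap: "(\<integral>\<^sup>+ t. ennreal ((min (norm (ip (x0 + (\<Sum>k<n. c k *\<^sub>R h k)) (xf t)))
                                     (norm (ip (c n *\<^sub>R h n) (xf t))))\<^sup>2) \<partial>M)
                \<le> ennreal ((c n / (real n + 1))\<^sup>2)"
  defines "x \<equiv> x0 + (\<Sum>k. c k *\<^sub>R h k)"
  shows "abs_analysis_dist M ip xf x (x - (2 * c n) *\<^sub>R h n) \<le> sqrt (8 * (1 + B)) * (c n / (real n + 1))"
proof -
  note c = factorial_decay_weights[OF c_pos c_Suc]
  have c_nonneg: "0 \<le> c k" for k using c_pos[of k] by simp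
  define T where "T = (\<Sum>j. c (j + Suc n) *\<^sub>R h (j + Suc n))"
  have "norm T \<le> (\<Sum>j. c (j + Suc n))"
    unfolding T_def using unit c_nonneg summable_ignore_initial_segment[OF c(1)]
    by (rule summable_unit_series(2))
  also have "\<dots> \<le> c n / (real n + 1)" by (rule c(4))
  finally have tail: "norm T \<le> c n / (real n + 1)" .
  have x_eq: "x = (x0 + (\<Sum>k<n. c k *\<^sub>R h k)) + T + c n *\<^sub>R h n"
    using suminf_split_initial_segment[where k="Suc n", OF summable_unit_series(1)[OF unit c_nonneg c(1)]]
    by (simp add: x_def T_def algebra_simps)
  have "(2 * c n) *\<^sub>R h n = c n *\<^sub>R h n + c n *\<^sub>R h n"
    by (metis scaleR_2 scaleR_scaleR)
  then have y_eq: "x - (2 * c n) *\<^sub>R h n = (x0 + (\<Sum>k<n. c k *\<^sub>R h k)) + T - c n *\<^sub>R h n"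
    by (simp add: x_eq algebra_simps)
  show ?thesis
    unfolding y_eq by (subst x_eq) (rule abs_analysis_dist_perturbation_le[OF meas upper \<open>0 \<le> B\<close> overlap tail])
qed

lemma Psi_orthonormal_series_le:
  assumes meas: "\<And>y. (\<lambda>t. ip y (xf t)) \<in> borel_measurable M"
    and upper: "\<And>y. (\<integral>\<^sup>+ t. ennreal ((norm (ip y (xf t)))\<^sup>2) \<partial>M) \<le> ennreal (B * (norm y)\<^sup>2)"
    and "0 \<le> B"
    and on: "orthonormal h UNIV" and x0: "\<forall>k. ip x0 (h k) = 0"
    and c_pos: "\<And>k. 0 < c k" and c_Suc: "\<And>k. c (Suc k) = c k / (2 * (real k + 1))"
    and overlap: "(\<integral>\<^sup>+ t. ennreal ((min (norm (ip (x0 + (\<Sum>k<n. c k *\<^sub>R h k)) (xf t)))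
                                     (norm (ip (c n *\<^sub>R h n) (xf t))))\<^sup>2) \<partial>M)
                \<le> ennreal ((c n / (real n + 1))\<^sup>2)"
    and "n \<noteq> 0"
  defines "x \<equiv> x0 + (\<Sum>k. c k *\<^sub>R h k)"
  shows "2 * c n \<le> phase_dist sc {l. norm l = 1} x (x - (2 * c n) *\<^sub>R h n)"
    and "Psi M ip sc {l. norm l = 1} xf x (x - (2 * c n) *\<^sub>R h n) \<le> sqrt (8 * (1 + B)) / 2 / real (Suc n)"
proof -
  note c = factorial_decay_weights[OF c_pos c_Suc]
  have unit: "norm (h k) = 1" for k using on by (rule orthonormal_norm) simp
  have c_nonneg: "0 \<le> c k" for k using c_pos[of k] by simp
  show phase: "2 * c n \<le> phase_dist sc {l. norm l = 1} x (x - (2 * c n) *\<^sub>R h n)"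
    unfolding x_def using summable_unit_series(1)[OF unit c_nonneg c(1)]
    by (rule phase_dist_orthonormal_series_ge[OF on x0 _ c_nonneg[of n] c(3)[of n] \<open>n \<noteq> 0\<close>])
  define K where "K = sqrt (8 * (1 + B))"
  have "Psi M ip sc {l. norm l = 1} xf x (x - (2 * c n) *\<^sub>R h n) \<le> K * (c n / (real n + 1)) / (2 * c n)"
    using abs_analysis_dist_unit_series_le[OF meas upper \<open>0 \<le> B\<close> unit c_pos c_Suc overlap] phase c_pos[of n]
    by (intro Psi_bounds(2)) (simp_all add: x_def K_def)
  also have "\<dots> = (K * c n) / ((2 * (real n + 1)) * c n)"
    by (simp add: ac_simps)
  also have "\<dots> = K / 2 / real (Suc n)"
    using c_pos[of n] by (simp add: divide_divide_eq_left)
  finally show "Psi M ip sc {l. norm l = 1} xf x (x - (2 * c n) *\<^sub>R h n) \<le> sqrt (8 * (1 + B)) / 2 / real (Suc n)"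
    unfolding K_def .
qed

lemma not_stable_PR_near_orthonormal_series:
  assumes meas: "\<And>y. (\<lambda>t. ip y (xf t)) \<in> borel_measurable M"
    and upper: "\<And>y. (\<integral>\<^sup>+ t. ennreal ((norm (ip y (xf t)))\<^sup>2) \<partial>M) \<le> ennreal (B * (norm y)\<^sup>2)"
    and "0 \<le> B"
    and on: "orthonormal h UNIV" and x0: "\<forall>k. ip x0 (h k) = 0"
    and c_pos: "\<And>k. 0 < c k" and c_Suc: "\<And>k. c (Suc k) = c k / (2 * (real k + 1))"
    and overlap: "\<And>n. (\<integral>\<^sup>+ t. ennreal ((min (norm (ip (x0 + (\<Sum>k<n. c k *\<^sub>R h k)) (xf t)))
                                            (norm (ip (c n *\<^sub>R h n) (xf t))))\<^sup>2) \<partial>M)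
                       \<le> ennreal ((c n / (real n + 1))\<^sup>2)"
  shows "\<not> stable_PR_near M ip sc {l. norm l = 1} xf (x0 + (\<Sum>k. c k *\<^sub>R h k))"
proof -
  define x where "x = x0 + (\<Sum>k. c k *\<^sub>R h k)"
  define y where "y n = x - (2 * c n) *\<^sub>R h n" for n
  define K where "K = sqrt (8 * (1 + B))"
  note series = Psi_orthonormal_series_le[OF meas upper \<open>0 \<le> B\<close> on x0 c_pos c_Suc overlap,
      folded x_def K_def]
  have Psi_lim: "(\<lambda>n. Psi M ip sc {l. norm l = 1} xf x (y n)) \<longlonglongrightarrow> 0"
  proof (rule tendsto_sandwich)
    show "\<forall>\<^sub>F n in sequentially. 0 \<le> Psi M ip sc {l. norm l = 1} xf x (y n)"
      using eventually_gt_at_top[of 0]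
    proof eventually_elim
      case (elim n)
      show ?case
        using series(1)[of n] c_pos[of n] elim
        by (intro Psi_bounds(1)[OF order_refl, where b="2 * c n"]) (auto simp: y_def)
    qed
    show "\<forall>\<^sub>F n in sequentially. Psi M ip sc {l. norm l = 1} xf x (y n) \<le> K / 2 / real (Suc n)"
      using eventually_gt_at_top[of 0] unfolding y_def by eventually_elim (rule series(2), simp)
    show "(\<lambda>n. K / 2 / real (Suc n)) \<longlonglongrightarrow> 0"
      by (rule LIMSEQ_Suc[OF lim_const_over_n])
  qed simp
  have unit: "norm (h k) = 1" for k using on by (rule orthonormal_norm) simp
  have "(\<lambda>n. norm ((2 * c n) *\<^sub>R h n)) \<longlonglongrightarrow> 0"
    using tendsto_mult_right_zero[OF summable_LIMSEQ_zero[OF factorial_decay_weights(1)[OF c_pos c_Suc]], of 2]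
      unit c_pos by (simp add: less_imp_le)
  then have "(\<lambda>n. (2 * c n) *\<^sub>R h n) \<longlonglongrightarrow> 0"
    by (rule tendsto_norm_zero_cancel)
  from tendsto_diff[OF tendsto_const[of x] this] have y_lim: "y \<longlonglongrightarrow> x"
    by (simp add: y_def[abs_def])
  have y_outside: "\<forall>\<^sub>F n in sequentially. y n \<notin> (\<lambda>l. sc l x) ` {l. norm l = 1} \<and> y n \<noteq> x"
    using eventually_gt_at_top[of 0]
  proof eventually_elim
    case (elim n)
    have "y n \<noteq> x" using c_pos[of n] unit[of n] by (auto simp: y_def)
    moreover have "0 < phase_dist sc {l. norm l = 1} x (y n)"
      using series(1)[of n] c_pos[of n] elim by (simp add: y_def)
    ultimately show ?case by (simp add: not_in_orbit_if_phase_dist_pos)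
  qed
  show ?thesis
    using not_stable_PR_near_if_Psi_tendsto_zero[OF y_lim y_outside Psi_lim] by (simp add: x_def)
qed

lemma exists_not_stable_PR_near_close:
  assumes inf: "infinite_dim sc" and meas: "\<And>y. (\<lambda>t. ip y (xf t)) \<in> borel_measurable M"
    and upper: "\<And>y. (\<integral>\<^sup>+ t. ennreal ((norm (ip y (xf t)))\<^sup>2) \<partial>M) \<le> ennreal (B * (norm y)\<^sup>2)"
    and "0 \<le> B" and "0 < \<epsilon>"
  shows "\<exists>x. \<not> stable_PR_near M ip sc {l. norm l = 1} xf x \<and> dist x x0 < \<epsilon>"
proof -
  have fin: "(\<integral>\<^sup>+ t. ennreal ((norm (ip y (xf t)))\<^sup>2) \<partial>M) < \<infinity>" for y
    using upper[of y] by (simp add: order_le_less_trans)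
  obtain e where on: "orthonormal e UNIV" and x0: "\<forall>k. ip x0 (e k) = 0"
    using exists_orthonormal_seq_orthogonal[OF inf] by blast
  define c where "c k = \<epsilon> / 4 / (2 ^ k * fact k)" for k
  have c_pos: "0 < c k" for k using \<open>0 < \<epsilon>\<close> by (simp add: c_def)
  have c_Suc: "c (Suc k) = c k / (2 * (real k + 1))" for k
    by (simp add: c_def field_simps)
  obtain m where "strict_mono m" and overlap: "\<And>n.
      (\<integral>\<^sup>+ t. ennreal ((min (norm (ip (x0 + (\<Sum>k<n. c k *\<^sub>R e (m k))) (xf t)))
                                (norm (ip (c n *\<^sub>R e (m n)) (xf t))))\<^sup>2) \<partial>M)
        \<le> ennreal ((c n / (real n + 1))\<^sup>2)"
    using exists_strict_mono_small_overlap[where c=c and u=x0 and \<delta>="\<lambda>n. c n / (real n + 1)",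
        OF meas fin on] c_pos by auto
  define h where "h k = e (m k)" for k
  have h: "orthonormal h UNIV"
    using on strict_mono_eq[OF \<open>strict_mono m\<close>] by (simp add: orthonormal_def h_def)
  have "\<not> stable_PR_near M ip sc {l. norm l = 1} xf (x0 + (\<Sum>k. c k *\<^sub>R h k))"
    using x0 \<open>0 \<le> B\<close> c_pos c_Suc overlap[folded h_def]
    by (intro not_stable_PR_near_orthonormal_series[OF meas upper _ h]) (auto simp: h_def)
  moreover have "norm (\<Sum>k. c k *\<^sub>R h k) \<le> suminf c"
    using orthonormal_norm[OF h] factorial_decay_weights(1)[OF c_pos c_Suc] c_pos
    by (intro summable_unit_series(2)) (simp_all add: less_imp_le)
  moreover have "suminf c < \<epsilon>"
    using factorial_decay_weights(2)[OF c_pos c_Suc] \<open>0 < \<epsilon>\<close> c_def[of 0] by simp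
  ultimately show ?thesis
    by (intro exI[of _ "x0 + (\<Sum>k. c k *\<^sub>R h k)"]) (simp add: dist_norm)
qed

lemma not_stable_PR_near_dense:
  assumes inf: "infinite_dim sc" and frame: "continuous_frame M ip xf"
  shows "closure {x. \<not> stable_PR_near M ip sc {l. norm l = 1} xf x} = UNIV"
proof -
  obtain A B where meas: "\<And>y. (\<lambda>t. ip y (xf t)) \<in> borel_measurable M" and "0 < A" "A \<le> B"
    and bounds: "\<And>y. ennreal (A * (norm y)\<^sup>2) \<le> (\<integral>\<^sup>+ t. ennreal ((norm (ip y (xf t)))\<^sup>2) \<partial>M) \<and>
                      (\<integral>\<^sup>+ t. ennreal ((norm (ip y (xf t)))\<^sup>2) \<partial>M) \<le> ennreal (B * (norm y)\<^sup>2)"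
    using frame unfolding continuous_frame_def by blast
  have "0 \<le> B" using \<open>0 < A\<close> \<open>A \<le> B\<close> by linarith
  have upper: "(\<integral>\<^sup>+ t. ennreal ((norm (ip y (xf t)))\<^sup>2) \<partial>M) \<le> ennreal (B * (norm y)\<^sup>2)" for y
    using bounds by blast
  show ?thesis
    using exists_not_stable_PR_near_close[OF inf meas upper \<open>0 \<le> B\<close>]
    unfolding set_eq_iff closure_approachable by auto
qed

corollary not_stable_PR_near_exists:
  assumes "infinite_dim sc" and "continuous_frame M ip xf"
  shows "\<exists>x. \<not> stable_PR_near M ip sc {l. norm l = 1} xf x"
proof (rule ccontr)
  assume "\<nexists>x. \<not> stable_PR_near M ip sc {l. norm l = 1} xf x"
  then have "{x. \<not> stable_PR_near M ip sc {l. norm l = 1} xf x} = {}" by simp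
  with not_stable_PR_near_dense[OF assms] show False by simp
qed

end

lemma hilbert_structure_real:
  "hilbert_structure (scaleR :: real \<Rightarrow> 'a \<Rightarrow> 'a::{real_inner,complete_space}) inner id"
  by unfold_locales
    (auto simp: inner_add_left inner_add_right inner_commute scaleR_add_right scaleR_add_left
      power2_eq_square simp flip: power2_norm_eq_inner)

lemma hilbert_structure_complex:
  assumes "complex_hilbert sc ip"
  shows "hilbert_structure sc ip cnj"
proof -
  have "(\<forall>a b. cnj (a + b) = cnj a + cnj b) \<and> (\<forall>a b. cnj (a * b) = cnj a * cnj b) \<and>
      (\<forall>r. cnj (complex_of_real r) = complex_of_real r) \<and> (\<forall>a. cnj (cnj a) = a) \<and>
      (\<forall>a. a * cnj a = complex_of_real ((cmod a)\<^sup>2))"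
    using complex_norm_square by simp
  with assms show ?thesis
    unfolding complex_hilbert_def hilbert_structure_def by (elim conjE) (intro conjI; blast)
qed

theorem theorem5p2:
  shows
  "(\<forall>(M::'m measure) (xf::'m \<Rightarrow> 'a::{real_inner,complete_space}).
      infinite_dim (scaleR :: real \<Rightarrow> 'a \<Rightarrow> 'a) \<and> continuous_frame M inner xf \<longrightarrow>
      (\<exists>x. \<not> stable_PR_near M inner scaleR {l::real. \<bar>l\<bar> = 1} xf x) \<and>
      closure {x. \<not> stable_PR_near M inner scaleR {l::real. \<bar>l\<bar> = 1} xf x} = UNIV)
   \<and>
   (\<forall>(M::'n measure) (sc::complex \<Rightarrow> 'b::banach \<Rightarrow> 'b) (ip::'b \<Rightarrow> 'b \<Rightarrow> complex) (xf::'n \<Rightarrow> 'b).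
      complex_hilbert sc ip \<and> infinite_dim sc \<and> continuous_frame M ip xf \<longrightarrow>
      (\<exists>x. \<not> stable_PR_near M ip sc {l. cmod l = 1} xf x) \<and>
      closure {x. \<not> stable_PR_near M ip sc {l. cmod l = 1} xf x} = UNIV)"
proof (rule conjI; intro allI impI)
  fix M :: "'m measure" and xf :: "'m \<Rightarrow> 'a"
  assume "infinite_dim (scaleR :: real \<Rightarrow> 'a \<Rightarrow> 'a) \<and> continuous_frame M inner xf"
  then show "(\<exists>x. \<not> stable_PR_near M inner scaleR {l::real. \<bar>l\<bar> = 1} xf x) \<and>
      closure {x. \<not> stable_PR_near M inner scaleR {l::real. \<bar>l\<bar> = 1} xf x} = UNIV"
    using hilbert_structure.not_stable_PR_near_exists[OF hilbert_structure_real, of M xf]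
      hilbert_structure.not_stable_PR_near_dense[OF hilbert_structure_real, of M xf]
    by simp
next
  fix M :: "'n measure" and sc :: "complex \<Rightarrow> 'b \<Rightarrow> 'b" and ip xf
  assume "complex_hilbert sc ip \<and> infinite_dim sc \<and> continuous_frame M ip xf"
  then have "hilbert_structure sc ip cnj" "infinite_dim sc" "continuous_frame M ip xf"
    by (simp_all add: hilbert_structure_complex)
  then show "(\<exists>x. \<not> stable_PR_near M ip sc {l. cmod l = 1} xf x) \<and>
      closure {x. \<not> stable_PR_near M ip sc {l. cmod l = 1} xf x} = UNIV"
    by (simp add: hilbert_structure.not_stable_PR_near_exists hilbert_structure.not_stable_PR_near_dense)
qed

end
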